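(* With $a_n = \left(\frac23\right)^n p_n\!\left(\frac14\right)$, as power series in $t$ (convergent near $t=0$), \[ \sum_{n=0}^\infty a_n\frac{t^{n+1}}{(n+1)!} = \frac{6e^{t/2}\left(\arcsin(e^{t/2}/2) - \arcsin(1/2)\right)}{(4-e^t)^{1/2}}. \]
   Context: Define polynomial sequences $(p_k(x))_{k\ge -1}$ and $(q_k(x))_{k\ge -1}$ by $p_{-1}(x)=0$, $q_{-1}(x)=1$ and, for $k\ge -1$, $p_{k+1}(x) = 2(kx+1)p_k(x) + 2x(1-x)p_k'(x) + q_k(x)$, $q_{k+1}(x) = (2(k+1)x+1)q_k(x) + 2x(1-x)q_k'(x)$. *)

theory Defs
  imports Complex_Main "HOL-Computational_Algebra.Polynomial"
begin

text \<open>pq m = (p_{m-1}, q_{m-1}); the paper's index k = m - 1 starts at -1.\<close>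
fun pq :: "nat \<Rightarrow> real poly \<times> real poly" where
  "pq 0 = (0, 1)"
| "pq (Suc m) =
     (let p = fst (pq m); q = snd (pq m); k = real m - 1 in
       (smult 2 [:1, k:] * p + [:0, 2, -2:] * pderiv p + q,
        [:1, 2 * (k + 1):] * q + [:0, 2, -2:] * pderiv q))"

definition p_poly :: "nat \<Rightarrow> real poly" where
  "p_poly n = fst (pq (Suc n))"

definition q_poly :: "nat \<Rightarrow> real poly" where
  "q_poly n = snd (pq (Suc n))"

definition a_seq :: "nat \<Rightarrow> real" where
  "a_seq n = (2/3) ^ n * poly (p_poly n) (1/4)"

end

theory Submission
  imports Defs
begin

text \<open>
  Let F be the right-hand side. It satisfies (4 - e^t) F' = 2 F + 3 e^t, and by induction its
  m-th derivative is (2 / (4 - e^t))^m (3/2 e^t p_(m-1)(x) + F(t) q_(m-1)(x)) with x = e^t / 4,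
  so that F^(n+1)(0) = a_n. Differentiating the equation n times gives a binomial recurrence
  for the Taylor coefficients of F, which yields |a_n| <= 4^n n!. Hence the Taylor series
  converges for |t| < 1/4, and a Cauchy product with exp shows that its sum solves the same
  equation. As (4 e^-t - 1) y^2 is a first integral of the homogeneous equation, the sum is F.
\<close>

section \<open>The generating function and its derivatives\<close>

definition arcsin_egf :: "real \<Rightarrow> real" where
  "arcsin_egf t = 6 * exp (t / 2) * (arcsin (exp (t / 2) / 2) - arcsin (1 / 2)) / sqrt (4 - exp t)"

lemma DERIV_arcsin_exp_half:
  assumes "exp t < 4"
  shows "DERIV (\<lambda>t. arcsin (exp (t / 2) / 2)) t :> exp (t / 2) / (2 * sqrt (4 - exp t))"
proof -
  have sq: "(exp (t / 2) / 2)\<^sup>2 = exp t / 4"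
    by (simp add: power_divide exp_double[symmetric])
  have "\<bar>exp (t / 2) / 2\<bar> < 1"
    unfolding abs_square_less_1[symmetric] sq using assms by simp
  then have deriv: "DERIV (\<lambda>t. arcsin (exp (t / 2) / 2)) t :>
      inverse (sqrt (1 - (exp (t / 2) / 2)\<^sup>2)) * (exp (t / 2) / 2 / 2)"
    by (auto intro!: derivative_eq_intros simp: abs_less_iff less_trans[OF _ exp_gt_zero])
  have "sqrt (1 - (exp (t / 2) / 2)\<^sup>2) = sqrt ((4 - exp t) / 2\<^sup>2)"
    unfolding sq by (simp add: field_simps)
  then have "sqrt (1 - (exp (t / 2) / 2)\<^sup>2) = sqrt (4 - exp t) / 2"
    by (simp only: real_sqrt_divide real_sqrt_abs abs_numeral)
  then show ?thesis
    using deriv by (simp only:) (simp add: field_simps)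
qed

lemma DERIV_sqrt_4_minus_exp:
  assumes "exp t < 4"
  shows "DERIV (\<lambda>t. sqrt (4 - exp t)) t :> - exp t / (2 * sqrt (4 - exp t))"
  using assms by (auto intro!: derivative_eq_intros simp: field_simps)

lemma DERIV_arcsin_egf:
  assumes "exp t < 4"
  shows "DERIV arcsin_egf t :> (2 * arcsin_egf t + 3 * exp t) / (4 - exp t)"
proof -
  define E s A where "E = exp (t / 2)" and "s = sqrt (4 - exp t)"
    and "A = arcsin (exp (t / 2) / 2) - arcsin (1 / 2)"
  have E2: "E\<^sup>2 = exp t" and s2: "s\<^sup>2 = 4 - exp t" and "s > 0"
    using assms by (simp_all add: E_def s_def flip: exp_double)
  have "DERIV (\<lambda>t. exp (t / 2)) t :> exp (t / 2) / 2"
    by (auto intro!: derivative_eq_intros)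
  from DERIV_divide[OF DERIV_mult[OF DERIV_cmult[OF this, of 6]
      DERIV_diff[OF DERIV_arcsin_exp_half[OF assms] DERIV_const]]
      DERIV_sqrt_4_minus_exp[OF assms]]
  have deriv: "DERIV arcsin_egf t :>
      ((6 * (E / 2) * A + 6 * E * (E / (2 * s) - 0)) * s - 6 * E * A * (- exp t / (2 * s))) / (s * s)"
    (is "DERIV _ _ :> ?D")
    using \<open>s > 0\<close> unfolding arcsin_egf_def[abs_def] E_def s_def A_def by simp
  have EE: "6 * E * (E / (2 * s) - 0) = 3 * exp t / s"
    by (simp flip: E2 add: power2_eq_square)
  have arcsin_egf_t: "arcsin_egf t = 6 * E * A / s"
    by (simp add: arcsin_egf_def E_def s_def A_def)
  have e_eq: "exp t = 4 - s * s"
    using s2 by (simp add: power2_eq_square)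
  have "?D = (2 * arcsin_egf t + 3 * exp t) / (4 - exp t)"
    unfolding EE arcsin_egf_t e_eq using \<open>s > 0\<close> by (simp add: field_simps)
  with deriv show ?thesis
    by (rule DERIV_cong)
qed

definition pq_form :: "nat \<Rightarrow> real \<Rightarrow> real" where
  "pq_form m t =
     3 / 2 * exp t * poly (fst (pq m)) (exp t / 4) + arcsin_egf t * poly (snd (pq m)) (exp t / 4)"

lemma poly_fst_pq_Suc:
  "poly (fst (pq (Suc m))) x = 2 * (1 + (real m - 1) * x) * poly (fst (pq m)) x
     + 2 * x * (1 - x) * poly (pderiv (fst (pq m))) x + poly (snd (pq m)) x"
  by (simp add: Let_def algebra_simps)

lemma poly_snd_pq_Suc:
  "poly (snd (pq (Suc m))) x = (1 + 2 * real m * x) * poly (snd (pq m)) x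
     + 2 * x * (1 - x) * poly (pderiv (snd (pq m))) x"
  by (simp add: Let_def algebra_simps)

(* The recursion defining p and q is exactly what differentiating pq_form in t produces. *)
lemma DERIV_pq_form:
  assumes "exp t < 4"
  shows "DERIV (pq_form m) t :>
    (2 * pq_form (Suc m) t - real m * exp t * pq_form m t) / (4 - exp t)"
proof -
  define x P P' Q Q' where "x = exp t / 4"
    and "P = poly (fst (pq m)) x" and "P' = poly (pderiv (fst (pq m))) x"
    and "Q = poly (snd (pq m)) x" and "Q' = poly (pderiv (snd (pq m))) x"
  have "DERIV (\<lambda>t. 3 / 2 * exp t * poly (fst (pq m)) (exp t / 4)) t :>
      3 / 2 * exp t * (P + x * P')"
    by (auto intro!: derivative_eq_intros simp: x_def P_def P'_def algebra_simps)
  moreover have "DERIV (\<lambda>t. poly (snd (pq m)) (exp t / 4)) t :> x * Q'"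
    by (auto intro!: derivative_eq_intros simp: x_def Q'_def)
  ultimately have deriv: "DERIV (pq_form m) t :>
      3 / 2 * exp t * (P + x * P')
      + ((2 * arcsin_egf t + 3 * exp t) / (4 - exp t) * Q + arcsin_egf t * (x * Q'))"
    (is "DERIV _ _ :> ?D")
    unfolding pq_form_def[abs_def]
    by (rule DERIV_cong[OF DERIV_add[OF _ DERIV_mult[OF DERIV_arcsin_egf[OF assms]]]])
      (simp_all add: Q_def x_def)
  have succ: "pq_form (Suc m) t
      = 3 / 2 * exp t * (2 * (1 + (real m - 1) * x) * P + 2 * x * (1 - x) * P' + Q)
      + arcsin_egf t * ((1 + 2 * real m * x) * Q + 2 * x * (1 - x) * Q')"
    unfolding pq_form_def poly_fst_pq_Suc poly_snd_pq_Suc x_def P_def P'_def Q_def Q'_def ..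
  have current: "pq_form m t = 3 / 2 * exp t * P + arcsin_egf t * Q"
    unfolding pq_form_def x_def P_def Q_def ..
  have "exp t = 4 * x" "x \<noteq> 1"
    using assms by (simp_all add: x_def)
  then have "?D = (2 * pq_form (Suc m) t - real m * exp t * pq_form m t) / (4 - exp t)"
    unfolding succ current by (simp add: field_simps)
  with deriv show ?thesis
    by (rule DERIV_cong)
qed

definition arcsin_egf_deriv :: "nat \<Rightarrow> real \<Rightarrow> real" where
  "arcsin_egf_deriv m t = (2 / (4 - exp t)) ^ m * pq_form m t"

lemma DERIV_arcsin_egf_deriv:
  assumes "exp t < 4"
  shows "DERIV (arcsin_egf_deriv m) t :> arcsin_egf_deriv (Suc m) t"
proof -
  define w where "w = 2 / (4 - exp t)"
  have "4 - exp t \<noteq> 0"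
    using assms by simp
  have "DERIV (\<lambda>t. 2 / (4 - exp t)) t :> exp t / (4 - exp t) * w"
    using \<open>4 - exp t \<noteq> 0\<close>
    by (auto intro!: derivative_eq_intros simp: w_def power2_eq_square field_simps)
  from DERIV_power[OF this, of m]
  have "DERIV (\<lambda>t. (2 / (4 - exp t)) ^ m) t :> real m * exp t / (4 - exp t) * w ^ m"
    by (cases m) (simp_all add: ac_simps w_def)
  from DERIV_mult[OF this DERIV_pq_form[OF assms]]
  have "DERIV (arcsin_egf_deriv m) t :> w ^ m * (2 * pq_form (Suc m) t / (4 - exp t))"
    unfolding arcsin_egf_deriv_def[abs_def]
    by (rule DERIV_cong) (simp add: diff_divide_distrib algebra_simps flip: w_def)
  then show ?thesis
    by (simp add: arcsin_egf_deriv_def w_def mult_ac)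
qed

lemma arcsin_egf_deriv_0: "arcsin_egf_deriv 0 = arcsin_egf"
  by (simp add: fun_eq_iff arcsin_egf_deriv_def pq_form_def)

lemma arcsin_egf_at_0: "arcsin_egf 0 = 0"
  by (simp add: arcsin_egf_def)

lemma arcsin_egf_deriv_0_at_0: "arcsin_egf_deriv 0 0 = 0"
  by (simp add: arcsin_egf_deriv_0 arcsin_egf_at_0)

lemma arcsin_egf_deriv_Suc_at_0: "arcsin_egf_deriv (Suc n) 0 = a_seq n"
  by (simp add: arcsin_egf_deriv_def pq_form_def arcsin_egf_at_0 a_seq_def p_poly_def)

lemma arcsin_egf_ode:
  assumes "exp t < 4"
  shows "(4 - exp t) * arcsin_egf_deriv 1 t = 2 * arcsin_egf t + 3 * exp t"
  using assms by (simp add: arcsin_egf_deriv_def pq_form_def Let_def one_pCons field_simps)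

section \<open>The recurrence for the Taylor coefficients\<close>

lemma sum_binomial_Suc:
  fixes c :: "nat \<Rightarrow> 'a::comm_semiring_1"
  shows "(\<Sum>k\<le>n. of_nat (n choose k) * (c k + c (Suc k)))
    = (\<Sum>k\<le>Suc n. of_nat (Suc n choose k) * c k)"
proof -
  have "(\<Sum>k\<le>n. of_nat (n choose k) * c k) = (\<Sum>k\<le>Suc n. of_nat (n choose k) * c k)"
    by (simp add: binomial_eq_0)
  also have "\<dots> = c 0 + (\<Sum>k\<le>n. of_nat (n choose Suc k) * c (Suc k))"
    by (subst sum.atMost_Suc_shift) simp
  finally have shifted: "(\<Sum>k\<le>n. of_nat (n choose k) * c k) = \<dots>" .
  have "(\<Sum>k\<le>Suc n. of_nat (Suc n choose k) * c k)
      = c 0 + (\<Sum>k\<le>n. of_nat (n choose Suc k) * c (Suc k))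
        + (\<Sum>k\<le>n. of_nat (n choose k) * c (Suc k))"
    by (subst sum.atMost_Suc_shift) (simp add: sum.distrib distrib_left ac_simps)
  then show ?thesis
    by (simp add: shifted sum.distrib distrib_left)
qed

lemma DERIV_binomial_sum_exp:
  assumes "\<And>k. DERIV (f k) x :> f (Suc k) x"
  shows "DERIV (\<lambda>x. \<Sum>k\<le>n. of_nat (n choose k) * (exp x * f k x)) x :>
    (\<Sum>k\<le>Suc n. of_nat (Suc n choose k) * (exp x * f k x))"
proof -
  have "DERIV (\<lambda>x. \<Sum>k\<le>n. of_nat (n choose k) * (exp x * f k x)) x :>
      (\<Sum>k\<le>n. of_nat (n choose k) * (exp x * f k x + exp x * f (Suc k) x))"
    using assms by (auto intro!: derivative_eq_intros sum.cong simp: algebra_simps)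
  then show ?thesis
    unfolding sum_binomial_Suc[of n "\<lambda>k. exp x * f k x"] .
qed

(* The n-th derivative of (4 - e^t) F' - 2 F - 3 e^t, by Leibniz' rule. *)
definition ode_residual :: "nat \<Rightarrow> real \<Rightarrow> real" where
  "ode_residual n t = 4 * arcsin_egf_deriv (Suc n) t
     - (\<Sum>k\<le>n. of_nat (n choose k) * (exp t * arcsin_egf_deriv (Suc k) t))
     - 2 * arcsin_egf_deriv n t - 3 * exp t"

lemma DERIV_ode_residual:
  assumes "exp t < 4"
  shows "DERIV (ode_residual n) t :> ode_residual (Suc n) t"
  unfolding ode_residual_def[abs_def]
  by (intro DERIV_diff DERIV_cmult DERIV_arcsin_egf_deriv DERIV_exp assms
      DERIV_binomial_sum_exp[where f = "\<lambda>k. arcsin_egf_deriv (Suc k)"])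

lemma ode_residual_eq_0:
  assumes "exp t < 4"
  shows "ode_residual n t = 0"
  using assms
proof (induction n arbitrary: t)
  case 0
  then show ?case
    using arcsin_egf_ode[OF 0] by (simp add: ode_residual_def arcsin_egf_deriv_0 algebra_simps)
next
  case (Suc n)
  have exp_lt_4: "exp y < 4 \<longleftrightarrow> y < ln 4" for y :: real
    by (metis exp_less_cancel_iff exp_ln zero_less_numeral)
  have "ode_residual n t = ode_residual n y" if "\<bar>t - y\<bar> < ln 4 - t" for y
    using that Suc by (simp add: exp_lt_4)
  moreover have "0 < ln 4 - t"
    using Suc.prems by (simp add: exp_lt_4)
  ultimately show ?case
    by (intro DERIV_local_const[OF DERIV_ode_residual[OF Suc.prems]]) auto
qed

lemma arcsin_egf_deriv_at_0_recurrence: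
  "4 * arcsin_egf_deriv (Suc n) 0
    = (\<Sum>k\<le>n. of_nat (n choose k) * arcsin_egf_deriv (Suc k) 0)
      + 2 * arcsin_egf_deriv n 0 + 3"
  using ode_residual_eq_0[of 0 n] by (simp add: ode_residual_def)

lemma of_nat_choose_mult_fact_le:
  assumes "k \<le> n"
  shows "of_nat (n choose k) * fact k \<le> (fact n :: real)"
proof -
  have "of_nat (n choose k) * fact k = fact n / (fact (n - k) :: real)"
    using fact_binomial[OF assms] by (simp add: mult.commute)
  also have "\<dots> \<le> fact n / 1"
    by (intro divide_left_mono) auto
  finally show ?thesis
    by simp
qed

lemma sum_powers_4_le: "(\<Sum>k<n. (4::real) ^ k) \<le> 4 ^ n / 3"
  by (induction n) simp_all

lemma binomial_recurrence_bound:
  fixes c :: "nat \<Rightarrow> real"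
  assumes "c 0 = 0"
    and rec: "\<And>n. 4 * c (Suc n) = (\<Sum>k\<le>n. of_nat (n choose k) * c (Suc k)) + 2 * c n + 3"
  shows "\<bar>c (Suc n)\<bar> \<le> 4 ^ n * fact n"
proof (induction n rule: less_induct)
  case (less n)
  define B :: real where "B = 4 ^ n * fact n"
  have "\<bar>\<Sum>k<n. of_nat (n choose k) * c (Suc k)\<bar> \<le> (\<Sum>k<n. 4 ^ k * fact n)"
  proof (rule order.trans[OF sum_abs sum_mono])
    fix k assume "k \<in> {..<n}"
    then have "of_nat (n choose k) * \<bar>c (Suc k)\<bar>
        \<le> of_nat (n choose k) * (4 ^ k * fact k)"
      by (intro mult_left_mono less.IH) auto
    also have "\<dots> \<le> 4 ^ k * fact n"
      using of_nat_choose_mult_fact_le[of k n] \<open>k \<in> {..<n}\<close>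
      by (simp add: mult_left_mono)
    finally show "\<bar>of_nat (n choose k) * c (Suc k)\<bar> \<le> 4 ^ k * fact n"
      by (simp add: abs_mult)
  qed
  also have "\<dots> \<le> B / 3"
    using sum_powers_4_le[of n] by (simp add: B_def flip: sum_distrib_right)
  finally have sum_bound: "\<bar>\<Sum>k<n. of_nat (n choose k) * c (Suc k)\<bar> \<le> B / 3" .
  have rec3: "3 * c (Suc n) = (\<Sum>k<n. of_nat (n choose k) * c (Suc k)) + 2 * c n + 3"
    using rec[of n] by (simp add: lessThan_Suc_atMost[symmetric])
  show ?case
  proof (cases n)
    case 0
    then show ?thesis
      using rec3 \<open>c 0 = 0\<close> by simp
  next
    case (Suc m)
    have "\<bar>c n\<bar> \<le> 4 ^ m * fact m"
      using less.IH Suc by simp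
    also have "\<dots> \<le> B / 4"
      using Suc by (simp add: B_def algebra_simps mult_left_mono)
    finally have "\<bar>c n\<bar> \<le> B / 4" .
    moreover have "(1::real) * 1 \<le> 4 ^ m * fact n"
      by (rule mult_mono) (simp_all add: one_le_power)
    then have "4 \<le> B"
      using Suc by (simp add: B_def)
    ultimately show ?thesis
      using rec3 sum_bound unfolding B_def[symmetric] by linarith
  qed
qed

lemma abs_arcsin_egf_deriv_Suc_at_0_le:
  "\<bar>arcsin_egf_deriv (Suc n) 0\<bar> \<le> 4 ^ n * fact n"
  by (rule binomial_recurrence_bound[OF arcsin_egf_deriv_0_at_0 arcsin_egf_deriv_at_0_recurrence])

lemma abs_arcsin_egf_deriv_at_0_le: "\<bar>arcsin_egf_deriv n 0\<bar> \<le> 4 ^ n * fact n"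
proof (cases n)
  case (Suc m)
  have "(4::real) ^ m * fact m \<le> 4 ^ Suc m * fact (Suc m)"
    by (intro mult_mono power_increasing fact_mono) auto
  then show ?thesis
    using order.trans[OF abs_arcsin_egf_deriv_Suc_at_0_le[of m]] Suc by simp
qed (simp add: arcsin_egf_deriv_0_at_0)

section \<open>Exponential generating functions\<close>

definition egf_series :: "(nat \<Rightarrow> real) \<Rightarrow> real \<Rightarrow> real" where
  "egf_series c x = (\<Sum>n. c n * x ^ n / fact n)"

lemma egf_series_at_0: "egf_series c 0 = c 0"
  using powser_zero[of "\<lambda>n. c n / fact n"] by (simp add: egf_series_def)

lemma summable_egf_series:
  fixes c :: "nat \<Rightarrow> real"
  assumes "\<And>n. \<bar>c n\<bar> \<le> M ^ n * fact n" and "\<bar>x\<bar> * M < 1"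
  shows "summable (\<lambda>n. \<bar>c n * x ^ n / fact n\<bar>)"
proof (rule summable_comparison_test)
  have "\<bar>c n * x ^ n / fact n\<bar> \<le> (\<bar>x\<bar> * M) ^ n" for n
  proof -
    have "\<bar>c n * x ^ n / fact n\<bar> = \<bar>c n\<bar> * \<bar>x\<bar> ^ n / fact n"
      by (simp add: abs_mult power_abs)
    also have "\<dots> \<le> M ^ n * fact n * \<bar>x\<bar> ^ n / fact n"
      by (intro divide_right_mono mult_right_mono assms) auto
    finally show ?thesis
      by (simp add: power_mult_distrib mult.commute)
  qed
  then show "\<exists>N. \<forall>n\<ge>N. norm \<bar>c n * x ^ n / fact n\<bar> \<le> (\<bar>x\<bar> * M) ^ n"
    by auto
  have "0 \<le> \<bar>x\<bar> * M"
    using order.trans[OF abs_ge_zero assms(1)[of 1]] by simp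
  then show "summable (\<lambda>n. (\<bar>x\<bar> * M) ^ n)"
    using assms(2) by (intro summable_geometric) simp
qed

lemma DERIV_egf_series:
  fixes c :: "nat \<Rightarrow> real"
  assumes "\<And>x. \<bar>x\<bar> < r \<Longrightarrow> summable (\<lambda>n. c n * x ^ n / fact n)"
    and "\<bar>x\<bar> < r"
  shows "DERIV (egf_series c) x :> egf_series (\<lambda>n. c (Suc n)) x"
proof -
  have diffs: "diffs (\<lambda>n. c n / fact n) = (\<lambda>n. c (Suc n) / fact n)"
    by (simp add: fun_eq_iff diffs_def divide_simps)
  have "DERIV (\<lambda>x. \<Sum>n. c n / fact n * x ^ n) x :>
      (\<Sum>n. diffs (\<lambda>n. c n / fact n) n * x ^ n)"
    using assms by (intro termdiffs_strong') auto
  then show ?thesis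
    unfolding diffs egf_series_def[abs_def] by simp
qed

lemma egf_series_times_exp_sums:
  fixes c :: "nat \<Rightarrow> real"
  assumes "summable (\<lambda>n. \<bar>c n * x ^ n / fact n\<bar>)"
  shows "(\<lambda>k. (\<Sum>i\<le>k. of_nat (k choose i) * c i) * x ^ k / fact k)
    sums (egf_series c x * exp x)"
proof -
  have "summable (\<lambda>n. norm (x ^ n / fact n))"
    using summable_exp[of "\<bar>x\<bar>"]
    by (simp add: abs_mult power_abs divide_inverse mult.commute)
  from Cauchy_product_sums[of "\<lambda>n. c n * x ^ n / fact n", OF _ this] assms
  have "(\<lambda>k. \<Sum>i\<le>k. c i * x ^ i / fact i * (x ^ (k - i) / fact (k - i)))
      sums (egf_series c x * exp x)"
    by (simp add: egf_series_def exp_def divide_inverse mult.commute)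
  moreover have "c i * x ^ i / fact i * (x ^ (k - i) / fact (k - i))
      = of_nat (k choose i) * c i * x ^ k / fact k" if "i \<le> k" for i k
  proof -
    have "x ^ k = x ^ i * x ^ (k - i)"
      using that by (simp flip: power_add)
    then show ?thesis
      using that by (simp add: binomial_fact)
  qed
  then have "(\<Sum>i\<le>k. c i * x ^ i / fact i * (x ^ (k - i) / fact (k - i)))
      = (\<Sum>i\<le>k. of_nat (k choose i) * c i) * x ^ k / fact k" for k
    unfolding sum_distrib_right sum_divide_distrib by (intro sum.cong) auto
  ultimately show ?thesis
    by simp
qed

lemma egf_series_ode:
  fixes c :: "nat \<Rightarrow> real"
  assumes rec: "\<And>n. 4 * c (Suc n) = (\<Sum>k\<le>n. of_nat (n choose k) * c (Suc k)) + 2 * c n + 3"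
    and summable: "summable (\<lambda>n. \<bar>c n * x ^ n / fact n\<bar>)"
    and summable_Suc: "summable (\<lambda>n. \<bar>c (Suc n) * x ^ n / fact n\<bar>)"
  shows "(4 - exp x) * egf_series (\<lambda>n. c (Suc n)) x = 2 * egf_series c x + 3 * exp x"
proof -
  have "(\<lambda>n. c n * x ^ n / fact n) sums egf_series c x"
    unfolding egf_series_def by (rule summable_sums[OF summable_rabs_cancel[OF summable]])
  moreover have "(\<lambda>n. c (Suc n) * x ^ n / fact n) sums egf_series (\<lambda>n. c (Suc n)) x"
    unfolding egf_series_def by (rule summable_sums[OF summable_rabs_cancel[OF summable_Suc]])
  moreover have "(\<lambda>n. x ^ n / fact n) sums exp x"
    using exp_converges[of x] by (simp add: divide_inverse mult.commute)
  ultimately have "(\<lambda>n. 4 * (c (Suc n) * x ^ n / fact n)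
        - (2 * (c n * x ^ n / fact n) + 3 * (x ^ n / fact n)))
      sums (4 * egf_series (\<lambda>n. c (Suc n)) x - (2 * egf_series c x + 3 * exp x))"
    by (intro sums_diff sums_add sums_mult)
  also have "(\<lambda>n. 4 * (c (Suc n) * x ^ n / fact n)
        - (2 * (c n * x ^ n / fact n) + 3 * (x ^ n / fact n)))
      = (\<lambda>n. (\<Sum>k\<le>n. of_nat (n choose k) * c (Suc k)) * x ^ n / fact n)"
  proof
    fix n
    have "(\<Sum>k\<le>n. of_nat (n choose k) * c (Suc k)) = 4 * c (Suc n) - 2 * c n - 3"
      using rec[of n] by simp
    then show "4 * (c (Suc n) * x ^ n / fact n) - (2 * (c n * x ^ n / fact n) + 3 * (x ^ n / fact n))
        = (\<Sum>k\<le>n. of_nat (n choose k) * c (Suc k)) * x ^ n / fact n"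
      by (simp only:) (simp add: diff_divide_distrib add_divide_distrib algebra_simps)
  qed
  finally have "4 * egf_series (\<lambda>n. c (Suc n)) x - (2 * egf_series c x + 3 * exp x)
      = egf_series (\<lambda>n. c (Suc n)) x * exp x"
    using egf_series_times_exp_sums[OF summable_Suc] by (rule sums_unique2)
  then show ?thesis
    by (simp add: algebra_simps)
qed

section \<open>Uniqueness, and the Taylor expansion\<close>

lemma linear_ode_solution_eq_0:
  fixes d d' :: "real \<Rightarrow> real"
  assumes deriv: "\<And>x. x \<in> {-r<..<r} \<Longrightarrow> DERIV d x :> d' x"
    and ode: "\<And>x. x \<in> {-r<..<r} \<Longrightarrow> (4 - exp x) * d' x = 2 * d x"
    and "d 0 = 0" and t: "t \<in> {-r<..<r}" and "exp t < 4"
  shows "d t = 0"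
proof -
  \<comment> \<open>(4 e^-x - 1) d^2 is a first integral of the equation.\<close>
  define g where "g x = (4 * exp (- x) - 1) * (d x)\<^sup>2" for x
  have "DERIV g x :> 0" if x: "x \<in> {-r<..<r}" for x
  proof -
    have deriv_g: "DERIV g x :>
        - 4 * exp (- x) * (d x)\<^sup>2 + (4 * exp (- x) - 1) * (2 * d x * d' x)"
      unfolding g_def[abs_def] using deriv[OF x]
      by (auto intro!: derivative_eq_intros simp: power2_eq_square)
    have "4 * exp (- x) - 1 = exp (- x) * (4 - exp x)"
      by (simp add: exp_minus field_simps)
    then have "(4 * exp (- x) - 1) * (2 * d x * d' x)
        = 2 * exp (- x) * d x * ((4 - exp x) * d' x)"
      by (simp add: algebra_simps)
    also have "\<dots> = 4 * exp (- x) * (d x)\<^sup>2"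
      by (simp add: ode[OF x] power2_eq_square)
    finally have "(4 * exp (- x) - 1) * (2 * d x * d' x) = 4 * exp (- x) * (d x)\<^sup>2" .
    with deriv_g show ?thesis
      by simp
  qed
  then have "g t = g 0"
    using t by (intro DERIV_isconst3[of "-r" r]) auto
  moreover have "4 * exp (- t) - 1 > 0"
    using \<open>exp t < 4\<close> by (simp add: exp_minus field_simps)
  ultimately show ?thesis
    using \<open>d 0 = 0\<close> by (simp add: g_def)
qed

lemma exp_lt_4_if_small: "\<bar>x\<bar> < 1 / 4 \<Longrightarrow> exp x < (4::real)"
  using exp_bound_half[of x] by simp

lemma arcsin_egf_taylor:
  assumes "\<bar>t\<bar> < 1 / 4"
  shows "(\<lambda>n. arcsin_egf_deriv n 0 * t ^ n / fact n) sums arcsin_egf t"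
proof -
  define c where "c n = arcsin_egf_deriv n 0" for n
  have rec: "4 * c (Suc n) = (\<Sum>k\<le>n. of_nat (n choose k) * c (Suc k)) + 2 * c n + 3" for n
    unfolding c_def by (rule arcsin_egf_deriv_at_0_recurrence)
  have bound: "\<bar>c n\<bar> \<le> 4 ^ n * fact n"
    and bound_Suc: "\<bar>c (Suc n)\<bar> \<le> 4 ^ n * fact n" for n
    unfolding c_def by (rule abs_arcsin_egf_deriv_at_0_le abs_arcsin_egf_deriv_Suc_at_0_le)+
  have summable: "summable (\<lambda>n. \<bar>c n * x ^ n / fact n\<bar>)"
    and summable_Suc: "summable (\<lambda>n. \<bar>c (Suc n) * x ^ n / fact n\<bar>)"
    if "\<bar>x\<bar> < 1 / 4" for x
    by (rule summable_egf_series[OF bound], use that in simp,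
        rule summable_egf_series[OF bound_Suc], use that in simp)
  have exp_lt_4: "exp x < 4" and x: "\<bar>x\<bar> < 1 / 4"
    if "x \<in> {- (1 / 4)<..<1 / 4}" for x :: real
    using that exp_lt_4_if_small by auto
  have deriv: "DERIV (\<lambda>x. egf_series c x - arcsin_egf x) x :>
      egf_series (\<lambda>n. c (Suc n)) x - arcsin_egf_deriv 1 x"
    if "x \<in> {- (1 / 4)<..<1 / 4}" for x :: real
  proof -
    have "DERIV (egf_series c) x :> egf_series (\<lambda>n. c (Suc n)) x"
      using summable_rabs_cancel[OF summable] x[OF that] by (rule DERIV_egf_series)
    from DERIV_diff[OF this DERIV_arcsin_egf_deriv[OF exp_lt_4[OF that], of 0]] show ?thesis
      by (simp add: arcsin_egf_deriv_0)
  qed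
  have ode: "(4 - exp x) * (egf_series (\<lambda>n. c (Suc n)) x - arcsin_egf_deriv 1 x)
      = 2 * (egf_series c x - arcsin_egf x)" if "x \<in> {- (1 / 4)<..<1 / 4}" for x :: real
    using egf_series_ode[OF rec summable[OF x[OF that]] summable_Suc[OF x[OF that]]]
      arcsin_egf_ode[OF exp_lt_4[OF that]]
    by (simp only: right_diff_distrib)
  have "egf_series c 0 - arcsin_egf 0 = 0"
    by (simp add: egf_series_at_0 c_def arcsin_egf_deriv_0_at_0 arcsin_egf_at_0)
  moreover have t: "t \<in> {- (1 / 4)<..<1 / 4}"
    using assms by auto
  ultimately have "egf_series c t - arcsin_egf t = 0"
    using linear_ode_solution_eq_0[where r = "1 / 4", OF deriv ode] exp_lt_4[OF t] by blast
  moreover have "(\<lambda>n. c n * t ^ n / fact n) sums egf_series c t"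
    unfolding egf_series_def by (rule summable_sums[OF summable_rabs_cancel[OF summable[OF assms]]])
  ultimately show ?thesis
    by (simp add: c_def)
qed

theorem mainTheorem7:
  shows "\<exists>r>0. \<forall>t::real. \<bar>t\<bar> < r \<longrightarrow>
    (\<lambda>n. a_seq n * t ^ (n + 1) / fact (n + 1)) sums
      (6 * exp (t / 2) * (arcsin (exp (t / 2) / 2) - arcsin (1 / 2)) / sqrt (4 - exp t))"
proof (intro exI[of _ "1 / 4"] conjI allI impI)
  fix t :: real
  assume "\<bar>t\<bar> < 1 / 4"
  then have "(\<lambda>n. arcsin_egf_deriv (Suc n) 0 * t ^ Suc n / fact (Suc n)) sums arcsin_egf t"
    using arcsin_egf_taylor sums_Suc_iff[of "\<lambda>n. arcsin_egf_deriv n 0 * t ^ n / fact n"]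
    by (simp add: arcsin_egf_deriv_0_at_0)
  then show "(\<lambda>n. a_seq n * t ^ (n + 1) / fact (n + 1)) sums
      (6 * exp (t / 2) * (arcsin (exp (t / 2) / 2) - arcsin (1 / 2)) / sqrt (4 - exp t))"
    by (simp add: arcsin_egf_deriv_Suc_at_0 arcsin_egf_def)
qed simp

end
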